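(* The exponential generating function $g(x,y)=g(x,y;p,q,r)=\sum_{n\ge1}b_n(y;p,q,r)\frac{x^n}{n!}$ satisfies $$\frac{\partial}{\partial x}g(x,y)=y+\left(p+\frac{yr-q}{1-y}\right)g(x,y)+\frac{y}{1-y}\bigl(q\,g(x,1)-yr\,g(xy,1)\bigr).$$
   Context: An inversion sequence of length $n$ is a sequence $\rho=\rho_1\cdots\rho_n$ of integers with $1\le \rho_i\le i$ for all $i$; $I_{n,i}$ is the set of those of length $n$ with last letter $i$. A level, descent, or ascent of $\rho$ is an index $i\in[n-1]$ with $\rho_i=\rho_{i+1}$, $\rho_i>\rho_{i+1}$, or $\rho_i<\rho_{i+1}$, respectively. Let $b_{n,i}(p,q,r)=\sum_{\rho\in I_{n,i}}p^{\mathrm{lev}(\rho)}q^{\mathrm{des}(\rho)}r^{\mathrm{asc}(\rho)}$ (numbers of levels, descents, ascents) and $b_n(y;p,q,r)=\sum_{i=1}^n b_{n,i}(p,q,r)y^i$. *)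

theory Defs
  imports Complex_Main "HOL-Computational_Algebra.Formal_Power_Series"
begin

text \<open>Inversion sequences of length n, as lists; list position k (0-based)
  corresponds to index k+1, so the condition is 1 <= rho_(k+1) <= k+1.\<close>
definition inv_seqs :: "nat \<Rightarrow> nat list set" where
  "inv_seqs n = {xs. length xs = n \<and> (\<forall>k<n. 1 \<le> xs ! k \<and> xs ! k \<le> k + 1)}"

definition inv_seqs_last :: "nat \<Rightarrow> nat \<Rightarrow> nat list set" where
  "inv_seqs_last n i = {xs \<in> inv_seqs n. last xs = i}"

definition lev :: "nat list \<Rightarrow> nat" where
  "lev xs = card {k. k + 1 < length xs \<and> xs ! k = xs ! (k + 1)}"

definition des :: "nat list \<Rightarrow> nat" where
  "des xs = card {k. k + 1 < length xs \<and> xs ! k > xs ! (k + 1)}"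

definition asc :: "nat list \<Rightarrow> nat" where
  "asc xs = card {k. k + 1 < length xs \<and> xs ! k < xs ! (k + 1)}"

definition bni :: "nat \<Rightarrow> nat \<Rightarrow> 'a::comm_ring_1 \<Rightarrow> 'a \<Rightarrow> 'a \<Rightarrow> 'a" where
  "bni n i p q r = (\<Sum>\<rho>\<in>inv_seqs_last n i. p ^ lev \<rho> * q ^ des \<rho> * r ^ asc \<rho>)"

definition bn :: "nat \<Rightarrow> 'a::comm_ring_1 \<Rightarrow> 'a \<Rightarrow> 'a \<Rightarrow> 'a \<Rightarrow> 'a" where
  "bn n y p q r = (\<Sum>i=1..n. bni n i p q r * y ^ i)"

definition egf :: "'a::field_char_0 \<Rightarrow> 'a \<Rightarrow> 'a \<Rightarrow> 'a \<Rightarrow> 'a fps" where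
  "egf p q r y = Abs_fps (\<lambda>n. if n = 0 then 0 else bn n y p q r / fact n)"

end

theory Submission
  imports Defs
begin

text \<open>Every inversion sequence of length n+1 is uniquely some \<rho> of length n followed by a
  letter j \<in> {1..n+1}, and appending j after the last letter i of \<rho> multiplies the weight by
  p, q or r according as j = i, j < i or j > i. Since i \<le> n, the sum of these factors against
  y^j is a geometric sum which, multiplied by 1 - y, equals (p(1 - y) + yr - q) y^i + qy - r y^(n+2).
  Summing over \<rho> gives
    (1 - y) b_(n+1)(y) = (p(1 - y) + yr - q) b_n(y) + qy b_n(1) - r y^(n+2) b_n(1),
  which is the differential equation compared coefficientwise, the coefficient of x^n in g(xy,1)
  being y^n b_n(1)/n!.\<close>

unbundle fps_syntax

lemma fps_compose_scaled_X_nth: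
  fixes f :: "'a::comm_ring_1 fps"
  shows "(f oo (fps_const c * fps_X)) $ n = c ^ n * f $ n"
  by (simp add: fps_compose_nth power_mult_distrib mult_delta_right)

lemma inv_seqs_0: "inv_seqs 0 = {[]}"
  by (auto simp: inv_seqs_def)

lemma inv_seqs_Suc:
  "inv_seqs (Suc n) = (\<lambda>(xs, j). xs @ [j]) ` (inv_seqs n \<times> {1..Suc n})"
proof (intro set_eqI iffI)
  fix ys assume ys: "ys \<in> inv_seqs (Suc n)"
  then have "ys \<noteq> []"
    by (auto simp: inv_seqs_def)
  then have "ys = butlast ys @ [last ys]"
    by simp
  moreover have "butlast ys \<in> inv_seqs n" "last ys \<in> {1..Suc n}"
    using ys \<open>ys \<noteq> []\<close> by (auto simp: inv_seqs_def nth_butlast last_conv_nth)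
  ultimately show "ys \<in> (\<lambda>(xs, j). xs @ [j]) ` (inv_seqs n \<times> {1..Suc n})"
    by (metis (no_types, lifting) SigmaI case_prod_conv image_eqI)
qed (auto simp: inv_seqs_def nth_append less_Suc_eq)

lemma finite_inv_seqs: "finite (inv_seqs n)"
  by (induction n) (simp_all add: inv_seqs_0 inv_seqs_Suc)

lemma last_inv_seqs:
  assumes "xs \<in> inv_seqs n" "n \<noteq> 0"
  shows "last xs \<in> {1..n}"
  using assms by (cases n) (auto simp: inv_seqs_Suc)

definition adj_count :: "(nat \<Rightarrow> nat \<Rightarrow> bool) \<Rightarrow> nat list \<Rightarrow> nat" where
  "adj_count P xs = card {k. k + 1 < length xs \<and> P (xs ! k) (xs ! (k + 1))}"

lemma adj_count_snoc:
  assumes "xs \<noteq> []"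
  shows "adj_count P (xs @ [j]) = adj_count P xs + (if P (last xs) j then 1 else 0)"
proof -
  let ?A = "{k. k + 1 < length xs \<and> P (xs ! k) (xs ! (k + 1))}"
  have split: "{k. k + 1 < length (xs @ [j]) \<and> P ((xs @ [j]) ! k) ((xs @ [j]) ! (k + 1))}
      = ?A \<union> (if P (last xs) j then {length xs - 1} else {})" (is "?B = _")
  proof (rule set_eqI)
    fix k
    show "k \<in> ?B \<longleftrightarrow> k \<in> ?A \<union> (if P (last xs) j then {length xs - 1} else {})"
      using assms by (cases "k + 1 < length xs"; cases "k = length xs - 1")
        (auto simp: nth_append last_conv_nth)
  qed
  have "finite ?A"
    by (rule finite_subset[of _ "{..<length xs}"]) auto
  then show ?thesis
    using assms unfolding adj_count_def split by (auto simp: card_insert_if)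
qed

definition inv_weight :: "'a::comm_ring_1 \<Rightarrow> 'a \<Rightarrow> 'a \<Rightarrow> nat list \<Rightarrow> 'a" where
  "inv_weight p q r xs = p ^ lev xs * q ^ des xs * r ^ asc xs"

definition step_weight :: "'a::comm_ring_1 \<Rightarrow> 'a \<Rightarrow> 'a \<Rightarrow> nat \<Rightarrow> nat \<Rightarrow> 'a" where
  "step_weight p q r i j = (if j = i then p else if j < i then q else r)"

lemma inv_weight_snoc:
  assumes "xs \<noteq> []"
  shows "inv_weight p q r (xs @ [j]) = inv_weight p q r xs * step_weight p q r (last xs) j"
proof -
  have "lev ys = adj_count (=) ys" "des ys = adj_count (>) ys" "asc ys = adj_count (<) ys"
    for ys by (simp_all add: lev_def des_def asc_def adj_count_def)
  then show ?thesis
    using assms by (simp add: inv_weight_def step_weight_def adj_count_snoc)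
qed

lemma bn_eq_sum_inv_seqs:
  assumes "n \<noteq> 0"
  shows "bn n y p q r = (\<Sum>xs\<in>inv_seqs n. inv_weight p q r xs * y ^ last xs)"
proof -
  have "bn n y p q r =
      (\<Sum>i=1..n. \<Sum>xs\<in>{xs \<in> inv_seqs n. last xs = i}. inv_weight p q r xs * y ^ last xs)"
    unfolding bn_def bni_def inv_seqs_last_def inv_weight_def
    by (simp add: sum_distrib_right)
  also have "\<dots> = (\<Sum>xs\<in>inv_seqs n. inv_weight p q r xs * y ^ last xs)"
    using last_inv_seqs[OF _ assms] by (intro sum.group finite_inv_seqs) auto
  finally show ?thesis .
qed

lemma bn_0: "bn 0 y p q r = 0"
  by (simp add: bn_def)

lemma bn_1: "bn (Suc 0) y p q r = y"
  by (simp add: bn_eq_sum_inv_seqs inv_seqs_Suc inv_seqs_0 inv_weight_def lev_def des_def asc_def)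

lemma bn_Suc_eq_sum_step_weight:
  assumes "n \<noteq> 0"
  shows "bn (Suc n) y p q r =
    (\<Sum>xs\<in>inv_seqs n. inv_weight p q r xs * (\<Sum>j=1..Suc n. step_weight p q r (last xs) j * y ^ j))"
proof -
  have "bn (Suc n) y p q r =
      (\<Sum>(xs, j)\<in>inv_seqs n \<times> {1..Suc n}. inv_weight p q r (xs @ [j]) * y ^ j)"
    by (simp add: bn_eq_sum_inv_seqs inv_seqs_Suc sum.reindex inj_on_def case_prod_unfold)
  also have "\<dots> = (\<Sum>xs\<in>inv_seqs n. \<Sum>j=1..Suc n. inv_weight p q r (xs @ [j]) * y ^ j)"
    by (rule sum.cartesian_product[symmetric])
  also have "\<dots> =
      (\<Sum>xs\<in>inv_seqs n. inv_weight p q r xs * (\<Sum>j=1..Suc n. step_weight p q r (last xs) j * y ^ j))"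
    using assms by (intro sum.cong refl)
      (auto simp: inv_weight_snoc sum_distrib_left mult.assoc inv_seqs_def simp del: sum.cl_ivl_Suc)
  finally show ?thesis .
qed

lemma one_minus_mult_step_weight_sum:
  fixes y :: "'a::comm_ring_1"
  assumes "1 \<le> i"
  shows "(1 - y) * (\<Sum>j=1..m. step_weight p q r i j * y ^ j) =
    (if m < i then q * (y - y ^ (m + 1))
     else q * (y - y ^ i) + p * y ^ i * (1 - y) + r * (y ^ (i + 1) - y ^ (m + 1)))"
proof (induction m)
  case 0
  then show ?case using assms by simp
next
  case (Suc m)
  have "(1 - y) * (\<Sum>j=1..Suc m. step_weight p q r i j * y ^ j) =
     (1 - y) * (\<Sum>j=1..m. step_weight p q r i j * y ^ j)
       + (1 - y) * step_weight p q r i (Suc m) * y ^ Suc m"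
    by (simp add: algebra_simps)
  then show ?case
    unfolding Suc.IH using assms
    by (cases "i = Suc m") (auto simp: step_weight_def algebra_simps not_less less_Suc_eq)
qed

lemma bn_Suc_recurrence:
  fixes y :: "'a::comm_ring_1"
  assumes "n \<noteq> 0"
  shows "(1 - y) * bn (Suc n) y p q r =
    (p * (1 - y) + y * r - q) * bn n y p q r + q * y * bn n 1 p q r - r * y ^ (n + 2) * bn n 1 p q r"
proof -
  have "(1 - y) * bn (Suc n) y p q r =
     (\<Sum>xs\<in>inv_seqs n.
        inv_weight p q r xs * ((1 - y) * (\<Sum>j=1..Suc n. step_weight p q r (last xs) j * y ^ j)))"
    by (simp add: bn_Suc_eq_sum_step_weight[OF assms] sum_distrib_left algebra_simps)
  also have "\<dots> =
     (\<Sum>xs\<in>inv_seqs n. (p * (1 - y) + y * r - q) * (inv_weight p q r xs * y ^ last xs)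
       + q * y * inv_weight p q r xs - r * y ^ (n + 2) * inv_weight p q r xs)"
  proof (intro sum.cong refl)
    fix xs assume "xs \<in> inv_seqs n"
    then have "1 \<le> last xs" "last xs \<le> n"
      using last_inv_seqs[OF _ assms] by auto
    then have "(1 - y) * (\<Sum>j=1..Suc n. step_weight p q r (last xs) j * y ^ j) =
        q * (y - y ^ last xs) + p * y ^ last xs * (1 - y) + r * (y ^ (last xs + 1) - y ^ (n + 2))"
      by (subst one_minus_mult_step_weight_sum) auto
    then show "inv_weight p q r xs *
        ((1 - y) * (\<Sum>j=1..Suc n. step_weight p q r (last xs) j * y ^ j)) =
      (p * (1 - y) + y * r - q) * (inv_weight p q r xs * y ^ last xs)
       + q * y * inv_weight p q r xs - r * y ^ (n + 2) * inv_weight p q r xs"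
      by (simp only:) (simp add: algebra_simps)
  qed
  also have "\<dots> = (p * (1 - y) + y * r - q) * bn n y p q r
     + q * y * bn n 1 p q r - r * y ^ (n + 2) * bn n 1 p q r"
    by (simp add: bn_eq_sum_inv_seqs[OF assms] sum.distrib sum_subtractf sum_distrib_left)
  finally show ?thesis .
qed

lemma bn_Suc_field_recurrence:
  fixes y :: "'a::field"
  assumes "y \<noteq> 1" "n \<noteq> 0"
  shows "bn (Suc n) y p q r = (p + (y * r - q) / (1 - y)) * bn n y p q r
           + y / (1 - y) * (q * bn n 1 p q r - y * r * (y ^ n * bn n 1 p q r))"
proof -
  define d where "d = 1 - y"
  have "d \<noteq> 0"
    using assms(1) by (simp add: d_def)
  have "bn (Suc n) y p q r
      = ((p * d + y * r - q) * bn n y p q r + q * y * bn n 1 p q r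
          - r * y ^ (n + 2) * bn n 1 p q r) / d"
    using bn_Suc_recurrence[OF assms(2), of y p q r] \<open>d \<noteq> 0\<close>
    by (simp add: d_def eq_divide_eq ac_simps)
  also have "\<dots> = (p + (y * r - q) / d) * bn n y p q r
      + y / d * (q * bn n 1 p q r - y * r * (y ^ n * bn n 1 p q r))"
    using \<open>d \<noteq> 0\<close> by (simp add: field_simps power_add power2_eq_square)
  finally show ?thesis
    by (simp add: d_def)
qed

lemma egf_nth: "egf p q r y $ n = bn n y p q r / fact n"
  by (simp add: egf_def bn_0)

lemma fps_deriv_egf_nth: "fps_deriv (egf p q r y) $ n = bn (Suc n) y p q r / fact n"
  by (simp add: egf_nth fps_deriv_nth fact_Suc del: of_nat_Suc)

lemma fps_deriv_egf_nth_recurrence: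
  fixes y :: "'a::field_char_0"
  assumes "y \<noteq> 1"
  shows "fps_deriv (egf p q r y) $ n =
           (if n = 0 then y else 0) + (p + (y * r - q) / (1 - y)) * egf p q r y $ n
           + y / (1 - y) * (q * egf p q r 1 $ n - y * r * (y ^ n * egf p q r 1 $ n))"
proof (cases "n = 0")
  case True
  then show ?thesis
    by (simp add: fps_deriv_egf_nth egf_nth bn_0 bn_1)
next
  case False
  then show ?thesis
    unfolding fps_deriv_egf_nth egf_nth bn_Suc_field_recurrence[OF assms False]
    by (simp add: divide_inverse algebra_simps)
qed

theorem theorem3p3:
  fixes p q r y :: "'a::field_char_0"
  assumes "y \<noteq> 1"
  shows "fps_deriv (egf p q r y) =
           fps_const y + fps_const (p + (y * r - q) / (1 - y)) * egf p q r y
           + fps_const (y / (1 - y)) *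
               (fps_const q * egf p q r 1
                - fps_const (y * r) * (egf p q r 1 oo (fps_const y * fps_X)))"
  by (rule fps_ext, subst fps_deriv_egf_nth_recurrence[OF assms]) (simp add: fps_compose_scaled_X_nth)

end
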